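(* Consider an additive random utility model with $n$ alternatives, i.e. a random vector $\epsilon=(\epsilon^{(1)},\dots,\epsilon^{(n)})^T$ such that (i) $\epsilon$ has zero mean, its joint distribution is absolutely continuous with respect to Lebesgue measure and fully supported on $\mathbb{R}^n$; and (ii) for all $k\neq m$ the density $g_{k,m}$ of the difference $\epsilon^{(m)}-\epsilon^{(k)}$ attains its maximum at some point $\bar z_{k,m}\in\mathbb{R}$ (a mode). Let $E(u)=\mathbb{E}_\epsilon\left(\max_{1\le i\le n} u^{(i)}+\epsilon^{(i)}\right)$ be the surplus function and, for $\eta>0$, let $\tilde E(U;\eta)=\eta\, E(U/\eta)$. Assume $\mathbb{E}\left(\max_{1\le i\le n}\epsilon^{(i)}\right)\le \alpha$. Consider the following online procedure over $T$ rounds: set $U_0=\mathbf{0}$; for $t=1,\dots,T$ the agent chooses $x_t=\nabla\tilde E(U_{t-1};\eta)\in\Delta_n$, then an (possibly adversarial) reward vector $u_t\in\mathbb{R}^n$ with $\|u_t\|_\infty\le K$ is revealed, the agent gains $\langle x_t,u_t\rangle$, and $U_t=U_{t-1}+u_t$. Define the regret $R(T)=\max_{x\in\Delta_n}\langle x,U_T\rangle-\sum_{t=1}^T\langle x_t,u_t\rangle$. Then, with $L=2\sum_{i=1}^n\sum_{j\neq i} g_{i,j}(\bar z_{i,j})$, \[ R(T)\le \eta\cdot\alpha+\frac{L\cdot K^2\cdot T}{\eta}. \] Optimizing over the scaling parameter $\eta$ yields $R(T)\le 2\sqrt{\alpha\, L\, T}\cdot K$; in particular the procedure is Hannan-consistent,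 i.e. $R(T)/T\to 0$.
   Context: $\Delta_n=\{p\in\mathbb{R}^n: \sum_i p^{(i)}=1,\ p^{(i)}\ge 0\}$ is the probability simplex; $\mathbf{0}$ is the zero vector; $\|u\|_\infty=\max_i|u^{(i)}|$. The parameter $\eta$ is a fixed positive step size (the optimized bound corresponds to choosing $\eta$ depending on $T$, $K$, $L$, $\alpha$). *)

theory Defs
  imports "HOL-Probability.Probability"
begin

definition prob_simplex :: "(real ^ 'n) set" where
  "prob_simplex = {p. (\<Sum>i\<in>UNIV. p $ i) = 1 \<and> (\<forall>i. 0 \<le> p $ i)}"

definition surplus :: "'a measure \<Rightarrow> ('a \<Rightarrow> real ^ 'n) \<Rightarrow> real ^ 'n \<Rightarrow> real" where
  "surplus M eps u = (\<integral>\<omega>. (MAX i\<in>UNIV. u $ i + eps \<omega> $ i) \<partial>M)"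

definition scaled_surplus :: "'a measure \<Rightarrow> ('a \<Rightarrow> real ^ 'n) \<Rightarrow> real \<Rightarrow> real ^ 'n \<Rightarrow> real" where
  "scaled_surplus M eps \<eta> U = \<eta> * surplus M eps ((1 / \<eta>) *\<^sub>R U)"

definition regret :: "nat \<Rightarrow> (nat \<Rightarrow> real ^ 'n) \<Rightarrow> (nat \<Rightarrow> real ^ 'n) \<Rightarrow> real" where
  "regret T x u = (SUP p\<in>prob_simplex. p \<bullet> (\<Sum>t=1..T. u t)) - (\<Sum>t=1..T. x t \<bullet> u t)"

end

theory Submission
  imports Defs
begin

text \<open>
  The scaled surplus \<open>F(U) = E max\<^sub>i (U\<^sub>i + \<eta> \<epsilon>\<^sub>i)\<close> is a potential for the regret.
  Since \<open>\<epsilon>\<close> has mean zero, \<open>F\<close> dominates every coordinate, so \<open>max\<^sub>p p \<bullet> U\<^sub>T \<le> F(U\<^sub>T)\<close>, while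
  \<open>F(0) \<le> \<eta> \<alpha>\<close>. Ties among the perturbed utilities are null events, because the pairwise
  differences have densities; hence the probabilities \<open>q\<^sub>i\<close> that alternative \<open>i\<close> is the
  unique maximiser form a subgradient of \<open>F\<close> at \<open>U\<close>, which must be the gradient \<open>x\<^sub>t\<close>.
  The increment \<open>F(U + u) - F(U) - q \<bullet> u\<close> is the expected gain from switching away from the
  winner \<open>i\<close>; a competitor \<open>j\<close> can only overtake it when \<open>y\<^sub>i - y\<^sub>j \<le> 2K\<close>, and then gains at
  most \<open>2K - (y\<^sub>i - y\<^sub>j)\<close>. Integrating this ramp against the density of \<open>\<epsilon>\<^sub>j - \<epsilon>\<^sub>i\<close>, bounded by
  its mode value, costs \<open>g\<^sub>i\<^sub>j(z\<^sub>i\<^sub>j) 2K\<^sup>2/\<eta>\<close>. Telescoping over the \<open>T\<close> rounds gives the bound, and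
  the choice of \<open>\<eta>\<close> balances its two terms.
\<close>

definition max_coord :: "real ^ 'n \<Rightarrow> real" where
  "max_coord y = (MAX i\<in>UNIV. y $ i)"

definition unique_argmax :: "real ^ 'n \<Rightarrow> 'n \<Rightarrow> bool" where
  "unique_argmax y i \<longleftrightarrow> (\<forall>j. j \<noteq> i \<longrightarrow> y $ j < y $ i)"

lemma max_coord_ge: "y $ i \<le> max_coord y"
  unfolding max_coord_def by (rule Max_ge) auto

lemma max_coord_eq_argmax: "(\<And>j. y $ j \<le> y $ i) \<Longrightarrow> max_coord y = y $ i"
  unfolding max_coord_def by (rule Max_eqI) auto

lemma max_coord_attained: obtains i where "max_coord y = y $ i"
proof -
  have "max_coord y \<in> (\<lambda>i. y $ i) ` UNIV"
    unfolding max_coord_def by (rule Max_in) auto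
  then show ?thesis using that by blast
qed

lemma max_coord_scaleR: "0 \<le> c \<Longrightarrow> max_coord (c *\<^sub>R y) = c * max_coord y"
  unfolding max_coord_def
  by (subst mono_Max_commute[where f="(*) c"]) (auto simp: mono_def mult_left_mono image_image)

lemma unique_argmax_exists:
  assumes "\<And>i j. i \<noteq> j \<Longrightarrow> y $ i \<noteq> y $ j"
  obtains i where "unique_argmax y i"
proof -
  obtain i where i: "max_coord y = y $ i" by (rule max_coord_attained)
  have "y $ j < y $ i" if "j \<noteq> i" for j
    using max_coord_ge[of y j] assms[OF that] i by simp
  then show ?thesis using that unfolding unique_argmax_def by blast
qed

lemma unique_argmax_imp_le: "unique_argmax y i \<Longrightarrow> y $ j \<le> y $ i"
  unfolding unique_argmax_def by (cases "j = i") (auto intro: less_imp_le)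

lemma unique_argmax_sum:
  fixes a :: "real ^ 'n"
  assumes "unique_argmax y i0"
  shows "(\<Sum>i\<in>UNIV. of_bool (unique_argmax y i) * a $ i) = a $ i0"
proof -
  have unique: "unique_argmax y i \<longleftrightarrow> i = i0" for i
    using assms less_asym unfolding unique_argmax_def by blast
  have "(\<Sum>i\<in>UNIV. of_bool (unique_argmax y i) * a $ i) = (\<Sum>i\<in>UNIV. if i = i0 then a $ i else 0)"
    by (rule sum.cong) (simp_all add: unique)
  then show ?thesis
    by simp
qed

definition ramp :: "real \<Rightarrow> real \<Rightarrow> real" where
  "ramp K d = indicator {0..2*K} d * (2*K - d)"

lemma ramp_nonneg: "0 \<le> ramp K d"
  by (auto simp: ramp_def indicator_def)

lemma ramp_le: "ramp K d \<le> 2 * \<bar>K\<bar>"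
  by (auto simp: ramp_def indicator_def)

lemma ramp_ge: "0 \<le> d \<Longrightarrow> 0 \<le> e \<Longrightarrow> e \<le> 2*K - d \<Longrightarrow> e \<le> ramp K d"
  by (auto simp: ramp_def indicator_def)

lemma borel_measurable_ramp[measurable]: "ramp K \<in> borel_measurable borel"
  unfolding ramp_def by measurable

lemma integrable_ramp: "integrable lborel (ramp K)"
proof -
  have "integrable lborel (\<lambda>d. (2*K - d) * indicator {0..2*K} d)"
    by (intro borel_integrable_atLeastAtMost continuous_intros)
  then show ?thesis unfolding ramp_def by (simp add: mult.commute)
qed

lemma integral_ramp:
  assumes "0 \<le> K"
  shows "(\<integral>d. ramp K d \<partial>lborel) = 2 * K\<^sup>2"
proof -
  have "((\<lambda>d. 2*K*d - d\<^sup>2/2) has_vector_derivative 2*K - d) (at d within {0..2*K})" for d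
    by (rule has_real_derivative_iff_has_vector_derivative[THEN iffD1])
       (auto intro!: derivative_eq_intros)
  then have "(\<integral>d. indicator {0..2*K} d *\<^sub>R (2*K - d) \<partial>lborel)
      = (2*K*(2*K) - (2*K)\<^sup>2/2) - (2*K*0 - 0\<^sup>2/2)"
    using assms by (intro integral_FTC_atLeastAtMost continuous_intros) auto
  then show ?thesis by (simp add: ramp_def power2_eq_square)
qed

lemma max_coord_add_le_ramp:
  assumes argmax: "\<And>j. y $ j \<le> y $ i" and bounded: "\<And>j. \<bar>a $ j\<bar> \<le> K"
  shows "max_coord (y + a) - max_coord y - a $ i \<le> (\<Sum>j\<in>UNIV - {i}. ramp K (y $ i - y $ j))"
proof -
  obtain j where j: "max_coord (y + a) = y $ j + a $ j"
    by (metis max_coord_attained vector_add_component)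
  have overshoot: "0 \<le> y $ j + a $ j - (y $ i + a $ i)"
    using max_coord_ge[of "y + a" i] j by simp
  have "max_coord (y + a) - max_coord y - a $ i = y $ j + a $ j - (y $ i + a $ i)"
    using j max_coord_eq_argmax[OF argmax] by simp
  also have "\<dots> \<le> (\<Sum>j\<in>UNIV - {i}. ramp K (y $ i - y $ j))"
  proof (cases "j = i")
    case True
    then show ?thesis by (simp add: sum_nonneg ramp_nonneg)
  next
    case False
    have "y $ j + a $ j - (y $ i + a $ i) \<le> ramp K (y $ i - y $ j)"
      using argmax[of j] overshoot bounded[of i] bounded[of j] by (intro ramp_ge) auto
    also have "\<dots> \<le> (\<Sum>j\<in>UNIV - {i}. ramp K (y $ i - y $ j))"
      using False by (intro member_le_sum ramp_nonneg) auto
    finally show ?thesis .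
  qed
  finally show ?thesis .
qed

lemma distributed_AE_neq:
  assumes "distributed M lborel Z (\<lambda>z. ennreal (g z))"
  shows "AE \<omega> in M. Z \<omega> \<noteq> c"
proof -
  have [measurable]: "Z \<in> borel_measurable M"
    using distributed_measurable[OF assms] by simp
  have "emeasure M (Z -` {c} \<inter> space M) = (\<integral>\<^sup>+z. ennreal (g z) * indicator {c} z \<partial>lborel)"
    by (rule distributed_emeasure[OF assms]) simp
  also have "\<dots> = (\<integral>\<^sup>+z. ennreal (g c) * indicator {c} z \<partial>lborel)"
    by (intro nn_integral_cong) (auto simp: indicator_def)
  also have "\<dots> = 0"
    by (simp add: nn_integral_cmult_indicator)
  finally show ?thesis
    by (intro AE_I[where N="Z -` {c} \<inter> space M"]) auto
qed

lemma integral_ramp_distributed_le: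
  assumes D: "distributed M lborel Z (\<lambda>z. ennreal (g z))"
    and g_nonneg: "\<And>z. 0 \<le> g z" and g_le: "\<And>z. g z \<le> G" and "0 < \<eta>" "0 \<le> K"
  shows "(\<integral>\<omega>. ramp K (c - \<eta> * Z \<omega>) \<partial>M) \<le> G * (2 * K\<^sup>2) / \<eta>"
proof -
  have [measurable]: "g \<in> borel_measurable borel"
    using distributed_real_measurable[OF _ D] g_nonneg by simp
  have ramp_affine: "integrable lborel (\<lambda>z. ramp K (c + (- \<eta>) * z))"
    using lborel_integrable_real_affine[OF integrable_ramp, of "-\<eta>" K c] \<open>0 < \<eta>\<close> by simp
  have "(\<integral>\<omega>. ramp K (c - \<eta> * Z \<omega>) \<partial>M) = (\<integral>z. g z * ramp K (c + (- \<eta>) * z) \<partial>lborel)"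
    by (subst distributed_integral[OF D, symmetric]) (auto simp: g_nonneg)
  also have "\<dots> \<le> (\<integral>z. G * ramp K (c + (- \<eta>) * z) \<partial>lborel)"
  proof (rule integral_mono)
    show G_ramp: "integrable lborel (\<lambda>z. G * ramp K (c + (- \<eta>) * z))"
      using ramp_affine by simp
    show "integrable lborel (\<lambda>z. g z * ramp K (c + (- \<eta>) * z))"
      by (rule Bochner_Integration.integrable_bound[OF G_ramp])
         (use g_nonneg g_le ramp_nonneg in \<open>auto intro!: order.trans[OF _ abs_ge_self] mult_right_mono\<close>)
    show "g z * ramp K (c + (- \<eta>) * z) \<le> G * ramp K (c + (- \<eta>) * z)" for z
      using g_le ramp_nonneg by (intro mult_right_mono)
  qed
  also have "\<dots> = G * (2 * K\<^sup>2) / \<eta>"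
    using lborel_integral_real_affine[of "-\<eta>" "ramp K" c] \<open>0 < \<eta>\<close> integral_ramp[OF \<open>0 \<le> K\<close>]
    by simp
  finally show ?thesis .
qed

lemma subgradient_eq_derivative:
  fixes f :: "'a::real_inner \<Rightarrow> real"
  assumes deriv: "(f has_derivative (\<lambda>h. x \<bullet> h)) (at U)"
    and subgradient: "\<And>W. q \<bullet> (W - U) \<le> f W - f U"
  shows "q = x"
proof -
  define v where "v = q - x"
  have line: "((\<lambda>s::real. U + s *\<^sub>R v) has_derivative (\<lambda>s. s *\<^sub>R v)) (at 0)"
    by (auto intro!: derivative_eq_intros)
  have "((\<lambda>s. f (U + s *\<^sub>R v)) has_derivative (\<lambda>s. (x \<bullet> v) * s)) (at 0)"
    using has_derivative_compose[OF line, of f "\<lambda>h. x \<bullet> h"] deriv by (simp add: mult.commute)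
  then have "((\<lambda>s. f (U + s *\<^sub>R v)) has_real_derivative x \<bullet> v) (at 0)"
    by (simp add: has_field_derivative_def)
  then have "((\<lambda>s. f (U + s *\<^sub>R v) - s * (q \<bullet> v)) has_real_derivative x \<bullet> v - q \<bullet> v) (at 0)"
    by (auto intro!: derivative_eq_intros)
  moreover have "f (U + 0 *\<^sub>R v) - 0 * (q \<bullet> v) \<le> f (U + s *\<^sub>R v) - s * (q \<bullet> v)" for s
    using subgradient[of "U + s *\<^sub>R v"] by simp
  ultimately have "x \<bullet> v - q \<bullet> v = 0"
    by (intro DERIV_local_min[where d=1]) auto
  then have "v \<bullet> v = 0"
    by (simp add: v_def inner_diff_left inner_commute)
  then show ?thesis
    by (simp add: v_def)
qed

lemma prob_simplex_inner_le:
  assumes "p \<in> prob_simplex" and "\<And>i. W $ i \<le> c"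
  shows "p \<bullet> W \<le> c"
proof -
  have "p \<bullet> W = (\<Sum>i\<in>UNIV. p $ i * W $ i)"
    by (simp add: inner_vec_def)
  also have "\<dots> \<le> (\<Sum>i\<in>UNIV. p $ i * c)"
    using assms by (intro sum_mono mult_left_mono) (auto simp: prob_simplex_def)
  also have "\<dots> = c"
    using assms(1) by (simp add: prob_simplex_def flip: sum_distrib_right)
  finally show ?thesis .
qed

lemma prob_simplex_nonempty: "prob_simplex \<noteq> ({} :: (real ^ 'n::finite) set)"
proof -
  have "(\<chi> i::'n. 1 / real CARD('n)) \<in> prob_simplex"
    by (simp add: prob_simplex_def)
  then show ?thesis by blast
qed

lemma regret_le_potential:
  fixes \<Phi> :: "real ^ 'n \<Rightarrow> real" and u x :: "nat \<Rightarrow> real ^ 'n"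
  assumes dominates: "\<And>W i. W $ i \<le> \<Phi> W"
    and step: "\<And>t. t \<in> {1..T} \<Longrightarrow>
      \<Phi> ((\<Sum>s=1..t-1. u s) + u t) - \<Phi> (\<Sum>s=1..t-1. u s) \<le> x t \<bullet> u t + B"
  shows "regret T x u \<le> \<Phi> 0 + real T * B"
proof -
  define S where "S t = (\<Sum>s=1..t. u s)" for t
  have "(SUP p\<in>prob_simplex. p \<bullet> S T) \<le> \<Phi> (S T)"
    by (intro cSUP_least prob_simplex_nonempty prob_simplex_inner_le dominates)
  moreover have "\<Phi> (S T) - \<Phi> 0 = (\<Sum>t<T. \<Phi> (S (Suc t)) - \<Phi> (S t))"
    using sum_lessThan_telescope[of "\<lambda>t. \<Phi> (S t)" T] by (simp add: S_def)
  moreover have "\<dots> \<le> (\<Sum>t<T. x (Suc t) \<bullet> u (Suc t) + B)"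
  proof (rule sum_mono)
    fix t assume "t \<in> {..<T}"
    then show "\<Phi> (S (Suc t)) - \<Phi> (S t) \<le> x (Suc t) \<bullet> u (Suc t) + B"
      using step[of "Suc t"] by (simp add: S_def)
  qed
  moreover have "\<dots> = (\<Sum>t=1..T. x t \<bullet> u t) + real T * B"
    by (simp add: sum.distrib sum.atLeast1_atMost_eq)
  ultimately show ?thesis
    unfolding regret_def S_def by linarith
qed

lemma tradeoff_at_balanced_eta:
  fixes \<alpha> \<eta> K L T :: real
  assumes "0 < \<eta>" "0 \<le> \<alpha>" "0 \<le> L * T" and \<eta>: "\<eta> = K * sqrt (L * T / \<alpha>)"
  shows "\<eta> * \<alpha> + L * K\<^sup>2 * T / \<eta> = 2 * sqrt (\<alpha> * L * T) * K"
proof -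
  define s where "s = sqrt (L * T / \<alpha>)"
  have "0 \<le> L * T / \<alpha>"
    using assms by simp
  then have "0 \<le> s"
    by (simp add: s_def)
  with assms \<open>0 \<le> L * T / \<alpha>\<close> have "0 < s" "0 < K" "\<alpha> \<noteq> 0"
    by (auto simp: s_def zero_less_mult_iff)
  then have LT: "L * T = s\<^sup>2 * \<alpha>"
    using assms by (simp add: s_def)
  have "\<alpha> * L * T = (s * \<alpha>)\<^sup>2"
    by (simp add: LT power2_eq_square algebra_simps)
  then have "sqrt (\<alpha> * L * T) = s * \<alpha>"
    using \<open>0 < s\<close> \<open>0 \<le> \<alpha>\<close> by simp
  moreover have "L * K\<^sup>2 * T / \<eta> = s * \<alpha> * K"
    unfolding \<eta> s_def[symmetric] using \<open>0 < s\<close> \<open>0 < K\<close>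
    by (simp add: LT power2_eq_square field_simps)
  ultimately show ?thesis
    unfolding \<eta> s_def[symmetric] by (simp add: algebra_simps)
qed

locale random_utility = prob_space M for M :: "'a measure" +
  fixes eps :: "'a \<Rightarrow> real ^ 'n" and g :: "'n \<Rightarrow> 'n \<Rightarrow> real \<Rightarrow> real"
  assumes integrable_eps: "\<And>i. integrable M (\<lambda>\<omega>. eps \<omega> $ i)"
    and mean_zero: "\<And>i. (\<integral>\<omega>. eps \<omega> $ i \<partial>M) = 0"
    and density_nonneg: "\<And>k m z. k \<noteq> m \<Longrightarrow> 0 \<le> g k m z"
    and distributed_diff: "\<And>k m. k \<noteq> m \<Longrightarrow>
          distributed M lborel (\<lambda>\<omega>. eps \<omega> $ m - eps \<omega> $ k) (\<lambda>z. ennreal (g k m z))"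
begin

lemma borel_measurable_eps[measurable]: "(\<lambda>\<omega>. eps \<omega> $ i) \<in> borel_measurable M"
  using integrable_eps by (rule borel_measurable_integrable)

lemma pred_unique_argmax[measurable]: "Measurable.pred M (\<lambda>\<omega>. unique_argmax (U + c *\<^sub>R eps \<omega>) i)"
  unfolding unique_argmax_def by simp

lemma integrable_max_coord: "integrable M (\<lambda>\<omega>. max_coord (U + c *\<^sub>R eps \<omega>))"
  unfolding max_coord_def
  by (rule integrable_MAX) (auto intro!: integrable_eps)

lemma AE_unique_argmax:
  assumes "c \<noteq> 0"
  shows "AE \<omega> in M. \<exists>i. unique_argmax (U + c *\<^sub>R eps \<omega>) i"
proof -
  have "AE \<omega> in M. \<forall>i j. i \<noteq> j \<longrightarrow> (U + c *\<^sub>R eps \<omega>) $ i \<noteq> (U + c *\<^sub>R eps \<omega>) $ j"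
  proof (intro eventually_all_finite impI)
    fix i j :: 'n
    show "AE \<omega> in M. i \<noteq> j \<longrightarrow> (U + c *\<^sub>R eps \<omega>) $ i \<noteq> (U + c *\<^sub>R eps \<omega>) $ j"
    proof (cases "i = j")
      case False
      show ?thesis
        using distributed_AE_neq[OF distributed_diff[OF False], of "(U $ i - U $ j) / c"]
        by eventually_elim (use \<open>c \<noteq> 0\<close> in \<open>auto simp: field_simps\<close>)
    qed simp
  qed
  then show ?thesis
    by eventually_elim (metis unique_argmax_exists)
qed

lemma integrable_unique_argmax: "integrable M (\<lambda>\<omega>. of_bool (unique_argmax (U + c *\<^sub>R eps \<omega>) i) :: real)"
  by (rule integrable_const_bound[where B=1]) auto

definition choice_prob :: "real \<Rightarrow> real ^ 'n \<Rightarrow> real ^ 'n" where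
  "choice_prob \<eta> U = (\<chi> i. prob {\<omega> \<in> space M. unique_argmax (U + \<eta> *\<^sub>R eps \<omega>) i})"

lemma inner_choice_prob:
  "choice_prob \<eta> U \<bullet> a = (\<integral>\<omega>. (\<Sum>i\<in>UNIV. of_bool (unique_argmax (U + \<eta> *\<^sub>R eps \<omega>) i) * a $ i) \<partial>M)"
proof -
  have "prob {\<omega> \<in> space M. unique_argmax (U + \<eta> *\<^sub>R eps \<omega>) i}
      = (\<integral>\<omega>. of_bool (unique_argmax (U + \<eta> *\<^sub>R eps \<omega>) i) \<partial>M)" for i
  proof -
    have "{\<omega> \<in> space M. unique_argmax (U + \<eta> *\<^sub>R eps \<omega>) i}
        = {\<omega>. unique_argmax (U + \<eta> *\<^sub>R eps \<omega>) i} \<inter> space M"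
      by blast
    also have "measure M \<dots> = (\<integral>\<omega>. indicator {\<omega>. unique_argmax (U + \<eta> *\<^sub>R eps \<omega>) i} \<omega> \<partial>M)"
      by simp
    finally show ?thesis
      by (simp add: indicator_def)
  qed
  then show ?thesis
    unfolding choice_prob_def inner_vec_def
    by (subst Bochner_Integration.integral_sum) (auto intro!: sum.cong integrable_unique_argmax)
qed

lemma scaled_surplus_eq_integral:
  assumes "0 < \<eta>"
  shows "scaled_surplus M eps \<eta> U = (\<integral>\<omega>. max_coord (U + \<eta> *\<^sub>R eps \<omega>) \<partial>M)"
proof -
  have "\<eta> * max_coord ((1 / \<eta>) *\<^sub>R U + eps \<omega>) = max_coord (U + \<eta> *\<^sub>R eps \<omega>)" for \<omega>
    using assms by (simp add: max_coord_scaleR[symmetric] scaleR_add_right)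
  then show ?thesis
    by (simp add: scaled_surplus_def surplus_def max_coord_def
        integral_mult_right_zero[symmetric] del: integral_mult_right_zero)
qed

lemma component_le_scaled_surplus:
  assumes "0 < \<eta>"
  shows "U $ i \<le> scaled_surplus M eps \<eta> U"
proof -
  have "U $ i = (\<integral>\<omega>. U $ i + \<eta> * eps \<omega> $ i \<partial>M)"
    using mean_zero[of i] integrable_eps[of i] by (simp add: prob_space)
  also have "\<dots> \<le> (\<integral>\<omega>. max_coord (U + \<eta> *\<^sub>R eps \<omega>) \<partial>M)"
    using max_coord_ge[of "U + \<eta> *\<^sub>R eps _" i]
    by (intro integral_mono integrable_max_coord) (auto intro!: integrable_eps)
  finally show ?thesis
    using scaled_surplus_eq_integral[OF assms] by simp
qed

lemma scaled_surplus_excess_eq_integral: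
  assumes "0 < \<eta>"
  shows "scaled_surplus M eps \<eta> (U + a) - scaled_surplus M eps \<eta> U - choice_prob \<eta> U \<bullet> a
    = (\<integral>\<omega>. max_coord (U + a + \<eta> *\<^sub>R eps \<omega>) - max_coord (U + \<eta> *\<^sub>R eps \<omega>)
           - (\<Sum>i\<in>UNIV. of_bool (unique_argmax (U + \<eta> *\<^sub>R eps \<omega>) i) * a $ i) \<partial>M)"
proof -
  have "integrable M (\<lambda>\<omega>. \<Sum>i\<in>UNIV. of_bool (unique_argmax (U + \<eta> *\<^sub>R eps \<omega>) i) * a $ i)"
    by (intro Bochner_Integration.integrable_sum integrable_mult_left integrable_unique_argmax)
  then show ?thesis
    unfolding scaled_surplus_eq_integral[OF assms] inner_choice_prob
    by (simp add: integrable_max_coord)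
qed

lemma choice_prob_subgradient:
  assumes "0 < \<eta>"
  shows "choice_prob \<eta> U \<bullet> (W - U) \<le> scaled_surplus M eps \<eta> W - scaled_surplus M eps \<eta> U"
proof -
  from assms have "\<eta> \<noteq> 0" by simp
  from AE_unique_argmax[OF this, of U]
  have "AE \<omega> in M. 0 \<le> max_coord (U + (W - U) + \<eta> *\<^sub>R eps \<omega>) - max_coord (U + \<eta> *\<^sub>R eps \<omega>)
      - (\<Sum>i\<in>UNIV. of_bool (unique_argmax (U + \<eta> *\<^sub>R eps \<omega>) i) * (W - U) $ i)"
  proof eventually_elim
    case (elim \<omega>)
    then obtain i where i: "unique_argmax (U + \<eta> *\<^sub>R eps \<omega>) i" by auto
    have "(U + (W - U) + \<eta> *\<^sub>R eps \<omega>) $ i = (U + \<eta> *\<^sub>R eps \<omega>) $ i + (W - U) $ i"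
      by simp
    then show ?case
      using max_coord_ge[of "U + (W - U) + \<eta> *\<^sub>R eps \<omega>" i] unique_argmax_sum[OF i, of "W - U"]
        max_coord_eq_argmax[OF unique_argmax_imp_le[OF i]]
      by linarith
  qed
  then have "0 \<le> scaled_surplus M eps \<eta> (U + (W - U)) - scaled_surplus M eps \<eta> U
      - choice_prob \<eta> U \<bullet> (W - U)"
    unfolding scaled_surplus_excess_eq_integral[OF assms] by (rule integral_nonneg_AE)
  then show ?thesis by simp
qed

lemma scaled_surplus_excess_le:
  assumes "0 < \<eta>" and bounded: "\<And>j. \<bar>a $ j\<bar> \<le> K"
    and density_le: "\<And>k m z. k \<noteq> m \<Longrightarrow> g k m z \<le> G k m"
  shows "scaled_surplus M eps \<eta> (U + a) - scaled_surplus M eps \<eta> U - choice_prob \<eta> U \<bullet> a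
    \<le> (\<Sum>k\<in>UNIV. \<Sum>m\<in>UNIV - {k}. G k m) * (2 * K\<^sup>2) / \<eta>"
proof -
  have "0 \<le> K"
    using bounded abs_ge_zero order_trans by blast
  define r where "r k m \<omega> = ramp K ((U $ k - U $ m) - \<eta> * (eps \<omega> $ m - eps \<omega> $ k))" for k m \<omega>
  have r_integrable: "integrable M (r k m)" for k m
    unfolding r_def
    by (rule integrable_const_bound[where B="2 * \<bar>K\<bar>"]) (auto simp: ramp_nonneg ramp_le)
  from assms have "\<eta> \<noteq> 0" by simp
  from AE_unique_argmax[OF this, of U]
  have "AE \<omega> in M. max_coord (U + a + \<eta> *\<^sub>R eps \<omega>) - max_coord (U + \<eta> *\<^sub>R eps \<omega>)
      - (\<Sum>i\<in>UNIV. of_bool (unique_argmax (U + \<eta> *\<^sub>R eps \<omega>) i) * a $ i)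
      \<le> (\<Sum>k\<in>UNIV. \<Sum>m\<in>UNIV - {k}. r k m \<omega>)"
  proof eventually_elim
    case (elim \<omega>)
    define y where "y = U + \<eta> *\<^sub>R eps \<omega>"
    obtain i where i: "unique_argmax y i" using elim unfolding y_def by auto
    have "max_coord (y + a) - max_coord y - a $ i \<le> (\<Sum>m\<in>UNIV - {i}. ramp K (y $ i - y $ m))"
      by (rule max_coord_add_le_ramp[OF unique_argmax_imp_le[OF i] bounded])
    also have "\<dots> = (\<Sum>m\<in>UNIV - {i}. r i m \<omega>)"
      by (simp add: r_def y_def algebra_simps)
    also have "\<dots> \<le> (\<Sum>k\<in>UNIV. \<Sum>m\<in>UNIV - {k}. r k m \<omega>)"
      by (rule member_le_sum) (auto intro: sum_nonneg simp: r_def ramp_nonneg)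
    moreover have "U + a + \<eta> *\<^sub>R eps \<omega> = y + a"
      by (simp add: y_def algebra_simps)
    ultimately show ?case
      using unique_argmax_sum[OF i, of a] by (simp only: y_def[symmetric])
  qed
  then have "scaled_surplus M eps \<eta> (U + a) - scaled_surplus M eps \<eta> U - choice_prob \<eta> U \<bullet> a
      \<le> (\<integral>\<omega>. (\<Sum>k\<in>UNIV. \<Sum>m\<in>UNIV - {k}. r k m \<omega>) \<partial>M)"
    unfolding scaled_surplus_excess_eq_integral[OF assms(1)]
    by (rule integral_mono_AE[rotated 2])
       (intro Bochner_Integration.integrable_diff Bochner_Integration.integrable_sum
         integrable_mult_left integrable_unique_argmax integrable_max_coord r_integrable)+
  also have "\<dots> = (\<Sum>k\<in>UNIV. \<Sum>m\<in>UNIV - {k}. \<integral>\<omega>. r k m \<omega> \<partial>M)"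
    by (simp add: Bochner_Integration.integral_sum r_integrable)
  also have "\<dots> \<le> (\<Sum>k\<in>UNIV. \<Sum>m\<in>UNIV - {k}. G k m * (2 * K\<^sup>2) / \<eta>)"
    unfolding r_def
    by (intro sum_mono integral_ramp_distributed_le[OF distributed_diff] density_nonneg density_le)
       (use \<open>0 < \<eta>\<close> \<open>0 \<le> K\<close> in auto)
  also have "\<dots> = (\<Sum>k\<in>UNIV. \<Sum>m\<in>UNIV - {k}. G k m) * (2 * K\<^sup>2) / \<eta>"
    by (simp add: sum_distrib_right sum_divide_distrib)
  finally show ?thesis .
qed

lemma scaled_surplus_increment_le:
  assumes "0 < \<eta>" and gradient: "(scaled_surplus M eps \<eta> has_derivative (\<lambda>h. x \<bullet> h)) (at U)"
    and "\<And>j. \<bar>a $ j\<bar> \<le> K" and "\<And>k m z. k \<noteq> m \<Longrightarrow> g k m z \<le> G k m"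
  shows "scaled_surplus M eps \<eta> (U + a) - scaled_surplus M eps \<eta> U
    \<le> x \<bullet> a + (\<Sum>k\<in>UNIV. \<Sum>m\<in>UNIV - {k}. G k m) * (2 * K\<^sup>2) / \<eta>"
proof -
  have "choice_prob \<eta> U = x"
    by (rule subgradient_eq_derivative[OF gradient choice_prob_subgradient[OF \<open>0 < \<eta>\<close>]])
  then show ?thesis
    using scaled_surplus_excess_le[OF assms(1,3,4), of U] by simp
qed

lemma surplus_zero_nonneg: "0 \<le> surplus M eps 0"
  using component_le_scaled_surplus[of 1 0] by (simp add: scaled_surplus_def)

end

theorem theorem1:
  fixes M :: "'a measure" and eps :: "'a \<Rightarrow> real ^ 'n"
    and g :: "'n \<Rightarrow> 'n \<Rightarrow> real \<Rightarrow> real" and zbar :: "'n \<Rightarrow> 'n \<Rightarrow> real"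
    and \<alpha> \<eta> K :: real and T :: nat
    and u x :: "nat \<Rightarrow> real ^ 'n"
  assumes P: "prob_space M"
    and meas: "eps \<in> borel_measurable M"
    and integrable: "\<And>i. integrable M (\<lambda>\<omega>. eps \<omega> $ i)"
    and zero_mean: "\<And>i. (\<integral>\<omega>. eps \<omega> $ i \<partial>M) = 0"
    and abs_cont: "absolutely_continuous lborel (distr M lborel eps)"
    and full_support: "\<And>S. open S \<Longrightarrow> S \<noteq> {} \<Longrightarrow> measure (distr M lborel eps) S > 0"
    and g_nonneg: "\<And>k m z. k \<noteq> m \<Longrightarrow> 0 \<le> g k m z"
    and g_density: "\<And>k m. k \<noteq> m \<Longrightarrow>
          distributed M lborel (\<lambda>\<omega>. eps \<omega> $ m - eps \<omega> $ k) (\<lambda>z. ennreal (g k m z))"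
    and g_mode: "\<And>k m z. k \<noteq> m \<Longrightarrow> g k m z \<le> g k m (zbar k m)"
    and alpha: "surplus M eps 0 \<le> \<alpha>"
    and eta_pos: "\<eta> > 0"
    and reward_bound: "\<And>t i. t \<in> {1..T} \<Longrightarrow> \<bar>u t $ i\<bar> \<le> K"
    and gradient: "\<And>t. t \<in> {1..T} \<Longrightarrow>
          (scaled_surplus M eps \<eta> has_derivative (\<lambda>h. x t \<bullet> h)) (at (\<Sum>s=1..t-1. u s))"
  shows "regret T x u \<le> \<eta> * \<alpha> +
            (2 * (\<Sum>i\<in>UNIV. \<Sum>j\<in>UNIV - {i}. g i j (zbar i j))) * K\<^sup>2 * real T / \<eta>
       \<and> (\<eta> = K * sqrt ((2 * (\<Sum>i\<in>UNIV. \<Sum>j\<in>UNIV - {i}. g i j (zbar i j))) * real T / \<alpha>) \<longrightarrow>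
            regret T x u \<le> 2 * sqrt (\<alpha> * (2 * (\<Sum>i\<in>UNIV. \<Sum>j\<in>UNIV - {i}. g i j (zbar i j))) * real T) * K)"
proof -
  interpret random_utility M eps g
    using P integrable zero_mean g_nonneg g_density
    by (intro random_utility.intro random_utility_axioms.intro) auto
  define L where "L = 2 * (\<Sum>i\<in>UNIV. \<Sum>j\<in>UNIV - {i}. g i j (zbar i j))"
  have "0 \<le> L"
    unfolding L_def by (auto intro!: sum_nonneg g_nonneg)
  have step: "scaled_surplus M eps \<eta> ((\<Sum>s=1..t-1. u s) + u t) - scaled_surplus M eps \<eta> (\<Sum>s=1..t-1. u s)
      \<le> x t \<bullet> u t + L * K\<^sup>2 / \<eta>" if t: "t \<in> {1..T}" for t
  proof -
    have "(\<Sum>i\<in>UNIV. \<Sum>j\<in>UNIV - {i}. g i j (zbar i j)) * (2 * K\<^sup>2) / \<eta> = L * K\<^sup>2 / \<eta>"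
      by (simp add: L_def)
    then show ?thesis
      using scaled_surplus_increment_le[OF eta_pos gradient[OF t] reward_bound[OF t] g_mode] by linarith
  qed
  have "regret T x u \<le> scaled_surplus M eps \<eta> 0 + real T * (L * K\<^sup>2 / \<eta>)"
    by (rule regret_le_potential[OF component_le_scaled_surplus[OF eta_pos] step])
  also have "\<dots> = \<eta> * surplus M eps 0 + L * K\<^sup>2 * real T / \<eta>"
    by (simp add: scaled_surplus_def)
  also have "\<dots> \<le> \<eta> * \<alpha> + L * K\<^sup>2 * real T / \<eta>"
    using alpha eta_pos by simp
  finally have main: "regret T x u \<le> \<eta> * \<alpha> + L * K\<^sup>2 * real T / \<eta>" .
  have "0 \<le> \<alpha>"
    using surplus_zero_nonneg alpha by linarith
  with main \<open>0 \<le> L\<close> have "regret T x u \<le> 2 * sqrt (\<alpha> * L * real T) * K"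
    if "\<eta> = K * sqrt (L * real T / \<alpha>)"
    using tradeoff_at_balanced_eta[OF eta_pos _ _ that] by simp
  with main show ?thesis
    unfolding L_def by blast
qed

end
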